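(* Let $\tau$ be a vocabulary. Every $\Pi^1_1\text{-}\mathrm{KROM}^r(\tau)$ formula $\Phi$ is equivalent (on all finite $\tau$-structures) to a first-order $\tau$-formula of the form $\forall \bar{x}\,\varphi$, where $\varphi$ is a quantifier-free formula in conjunctive normal form (whose literals are atomic or negated atomic $\tau$-formulas, equality included).
   Context: All structures are finite; every vocabulary contains equality. For a vocabulary $\tau$, an SO-KROM$^r(\tau)$ formula is a second-order formula of the form $Q_1R_1\cdots Q_mR_m\forall\bar{x}(C_1\wedge\cdots\wedge C_n)$, where each $Q_i\in\{\forall,\exists\}$, $R_1,\dots,R_m$ are second-order relation variables, and each clause $C_j$ is a disjunction $\beta_1\vee\cdots\vee\beta_q\vee H_1\vee H_2$ in which each $\beta_s$ is an atomic or negated atomic $\tau$-formula $P\bar{y}$ or $\neg P\bar{y}$ ($P\in\tau$, including equality), and each $H_t$ is one of $R_i\bar{z}$, $\neg R_i\bar{z}$, $\exists z_1\cdots\exists z_{r}R_i z_1\dots z_r$ (with $r$ the arity of $R_i$, $1\le i\le m$), or $\bot$. (If the third option is disallowed, the logic is SO-KROM, second-order Krom logic.) $\Sigma^1_k\text{-}\mathrm{KROM}^r$ (resp. $\Pi^1_k\text{-}\mathrm{KROM}^r$) is the set of SO-KROM$^r$ formulas whose second-order quantifier prefix starts with an existential (resp. universal) quantifier and has exactly $k-1$ alternations between blocks of existential and universal quantifiers; similarly $\Sigma^1_k$-KROM, $\Pi^1_k$-KROM for SO-KROM. *)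

theory Defs
  imports Main
begin

text \<open>A vocabulary is a type 'p of relation symbols together with an arity function
  ar. A tau-structure with universe type 'a is a pair (A, I): a universe A and
  an interpretation I P, a set of tuples (lists) of length ar P over A.\<close>

definition rels :: "'a set \<Rightarrow> nat \<Rightarrow> 'a list set" where
  "rels A r = {xs. length xs = r \<and> set xs \<subseteq> A}"

definition finite_structure :: "('p \<Rightarrow> nat) \<Rightarrow> 'a set \<Rightarrow> ('p \<Rightarrow> 'a list set) \<Rightarrow> bool" where
  "finite_structure ar A I \<longleftrightarrow> finite A \<and> A \<noteq> {} \<and> (\<forall>P. I P \<subseteq> rels A (ar P))"

datatype 'p atom = Rel 'p "nat list" | Eq nat nat

datatype 'p lit = Pos "'p atom" | Neg "'p atom"

fun atom_wf :: "('p \<Rightarrow> nat) \<Rightarrow> 'p atom \<Rightarrow> bool" where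
  "atom_wf ar (Rel P ys) \<longleftrightarrow> length ys = ar P"
| "atom_wf ar (Eq x y) \<longleftrightarrow> True"

fun lit_wf :: "('p \<Rightarrow> nat) \<Rightarrow> 'p lit \<Rightarrow> bool" where
  "lit_wf ar (Pos a) \<longleftrightarrow> atom_wf ar a"
| "lit_wf ar (Neg a) \<longleftrightarrow> atom_wf ar a"

fun atom_sem :: "('p \<Rightarrow> 'a list set) \<Rightarrow> (nat \<Rightarrow> 'a) \<Rightarrow> 'p atom \<Rightarrow> bool" where
  "atom_sem I s (Rel P ys) \<longleftrightarrow> map s ys \<in> I P"
| "atom_sem I s (Eq x y) \<longleftrightarrow> s x = s y"

fun lit_sem :: "('p \<Rightarrow> 'a list set) \<Rightarrow> (nat \<Rightarrow> 'a) \<Rightarrow> 'p lit \<Rightarrow> bool" where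
  "lit_sem I s (Pos a) \<longleftrightarrow> atom_sem I s a"
| "lit_sem I s (Neg a) \<longleftrightarrow> \<not> atom_sem I s a"

text \<open>A quantifier-free CNF is a list of clauses, each a list of literals (a
  disjunction). All variables are universally quantified (the sentence
  forall x-bar phi with x-bar the variables of phi).\<close>

type_synonym 'p fo_cnf = "'p lit list list"

definition fo_cnf_wf :: "('p \<Rightarrow> nat) \<Rightarrow> 'p fo_cnf \<Rightarrow> bool" where
  "fo_cnf_wf ar \<phi> \<longleftrightarrow> (\<forall>D\<in>set \<phi>. \<forall>l\<in>set D. lit_wf ar l)"

definition fo_univ_sat :: "'a set \<Rightarrow> ('p \<Rightarrow> 'a list set) \<Rightarrow> 'p fo_cnf \<Rightarrow> bool" where
  "fo_univ_sat A I \<phi> \<longleftrightarrow>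
     (\<forall>s. (\<forall>v. s v \<in> A) \<longrightarrow> (\<forall>D\<in>set \<phi>. \<exists>l\<in>set D. lit_sem I s l))"

text \<open>Second-order variables R_i are referred to by their position i (starting at 0)
  in the quantifier prefix. The H-part of a clause is one of
  R_i z-bar, not R_i z-bar, (exists z_1 ... z_r. R_i z_1 ... z_r), or bottom.\<close>

datatype hlit = HPos nat "nat list" | HNeg nat "nat list" | HEx nat | HBot

text \<open>A clause beta_1 or ... or beta_q or H_1 or H_2.\<close>

type_synonym 'p kclause = "'p lit list \<times> hlit \<times> hlit"

text \<open>A prefix entry (q, r): q = True means universal, False existential; r is the
  arity of the quantified relation variable.\<close>

record 'p sokrom =
  prefix :: "(bool \<times> nat) list"
  clauses :: "'p kclause list"

fun hlit_wf :: "(bool \<times> nat) list \<Rightarrow> hlit \<Rightarrow> bool" where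
  "hlit_wf pre (HPos i zs) \<longleftrightarrow> i < length pre \<and> length zs = snd (pre ! i)"
| "hlit_wf pre (HNeg i zs) \<longleftrightarrow> i < length pre \<and> length zs = snd (pre ! i)"
| "hlit_wf pre (HEx i) \<longleftrightarrow> i < length pre"
| "hlit_wf pre HBot \<longleftrightarrow> True"

definition sokrom_wf :: "('p \<Rightarrow> nat) \<Rightarrow> 'p sokrom \<Rightarrow> bool" where
  "sokrom_wf ar \<Phi> \<longleftrightarrow>
     (\<forall>(bs, h1, h2)\<in>set (clauses \<Phi>).
        (\<forall>l\<in>set bs. lit_wf ar l) \<and> hlit_wf (prefix \<Phi>) h1 \<and> hlit_wf (prefix \<Phi>) h2)"

fun hlit_sem :: "(nat \<Rightarrow> 'a list set) \<Rightarrow> (nat \<Rightarrow> 'a) \<Rightarrow> hlit \<Rightarrow> bool" where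
  "hlit_sem V s (HPos i zs) \<longleftrightarrow> map s zs \<in> V i"
| "hlit_sem V s (HNeg i zs) \<longleftrightarrow> map s zs \<notin> V i"
| "hlit_sem V s (HEx i) \<longleftrightarrow> V i \<noteq> {}"
| "hlit_sem V s HBot \<longleftrightarrow> False"

definition matrix_sat :: "'a set \<Rightarrow> ('p \<Rightarrow> 'a list set) \<Rightarrow> (nat \<Rightarrow> 'a list set)
    \<Rightarrow> 'p kclause list \<Rightarrow> bool" where
  "matrix_sat A I V cs \<longleftrightarrow>
     (\<forall>s. (\<forall>v. s v \<in> A) \<longrightarrow>
        (\<forall>(bs, h1, h2)\<in>set cs.
           (\<exists>l\<in>set bs. lit_sem I s l) \<or> hlit_sem V s h1 \<or> hlit_sem V s h2))"

fun prefix_sat :: "'a set \<Rightarrow> (bool \<times> nat) list \<Rightarrow> nat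
    \<Rightarrow> ((nat \<Rightarrow> 'a list set) \<Rightarrow> bool) \<Rightarrow> (nat \<Rightarrow> 'a list set) \<Rightarrow> bool" where
  "prefix_sat A [] i M V \<longleftrightarrow> M V"
| "prefix_sat A ((q, r) # qs) i M V \<longleftrightarrow>
     (if q then (\<forall>R. R \<subseteq> rels A r \<longrightarrow> prefix_sat A qs (Suc i) M (V(i := R)))
      else (\<exists>R. R \<subseteq> rels A r \<and> prefix_sat A qs (Suc i) M (V(i := R))))"

definition sokrom_sat :: "'a set \<Rightarrow> ('p \<Rightarrow> 'a list set) \<Rightarrow> 'p sokrom \<Rightarrow> bool" where
  "sokrom_sat A I \<Phi> \<longleftrightarrow>
     prefix_sat A (prefix \<Phi>) 0 (\<lambda>V. matrix_sat A I V (clauses \<Phi>)) (\<lambda>_. {})"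

text \<open>Pi^1_1-KROM^r: the prefix starts with a universal quantifier and has no
  alternations, i.e. it is a nonempty block of universal quantifiers.\<close>

definition Pi11_krom_r :: "('p \<Rightarrow> nat) \<Rightarrow> 'p sokrom \<Rightarrow> bool" where
  "Pi11_krom_r ar \<Phi> \<longleftrightarrow> sokrom_wf ar \<Phi> \<and> prefix \<Phi> \<noteq> [] \<and> (\<forall>qr\<in>set (prefix \<Phi>). fst qr)"

end

theory Submission
  imports Defs
begin

text \<open>For a fixed first-order assignment s, the H-part of a clause holds under every
  valuation of the relation variables iff it holds under the least valuation
  that falsifies all its negative literals: any valuation falsifying the H-part
  contains that one, and positive literals are monotone. For two literals this
  condition is a conjunction of disjunctions of equalities between the variables
  of s, so the universal second-order quantifiers can be pushed inside the
  first-order ones and replaced by equality literals.\<close>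

definition admissible_from :: "(bool \<times> nat) list \<Rightarrow> 'a set \<Rightarrow> nat
    \<Rightarrow> (nat \<Rightarrow> 'a list set) \<Rightarrow> (nat \<Rightarrow> 'a list set) \<Rightarrow> bool" where
  "admissible_from pre A k V V' \<longleftrightarrow>
     (\<forall>i<length pre. V' (k + i) \<subseteq> rels A (snd (pre ! i))) \<and>
     (\<forall>j. j < k \<or> k + length pre \<le> j \<longrightarrow> V' j = V j)"

lemma admissible_from_Cons:
  "admissible_from ((q, r) # qs) A k V V' \<longleftrightarrow>
     V' k \<subseteq> rels A r \<and> admissible_from qs A (Suc k) (V(k := V' k)) V'"
proof -
  have "(\<forall>i<length ((q, r) # qs). V' (k + i) \<subseteq> rels A (snd (((q, r) # qs) ! i))) \<longleftrightarrow>
      V' k \<subseteq> rels A r \<and> (\<forall>i<length qs. V' (Suc k + i) \<subseteq> rels A (snd (qs ! i)))"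
    by (simp add: All_less_Suc2)
  moreover have "(\<forall>j. j < k \<or> k + length ((q, r) # qs) \<le> j \<longrightarrow> V' j = V j) \<longleftrightarrow>
      (\<forall>j. j < Suc k \<or> Suc k + length qs \<le> j \<longrightarrow> V' j = (V(k := V' k)) j)"
    by (auto simp: less_Suc_eq)
  ultimately show ?thesis
    by (simp add: admissible_from_def)
qed

lemma prefix_sat_universal:
  assumes "\<forall>qr\<in>set pre. fst qr"
  shows "prefix_sat A pre k M V \<longleftrightarrow> (\<forall>V'. admissible_from pre A k V V' \<longrightarrow> M V')"
  using assms
proof (induction pre arbitrary: k V)
  case Nil
  have "admissible_from [] A k V V' \<longleftrightarrow> V' = V" for V'
    by (auto simp: admissible_from_def fun_eq_iff not_le[symmetric])
  then show ?case by simp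
next
  case (Cons qr qs)
  obtain r where qr: "qr = (True, r)"
    using Cons.prems by (cases qr) auto
  have "prefix_sat A (qr # qs) k M V \<longleftrightarrow>
      (\<forall>R. R \<subseteq> rels A r \<longrightarrow> (\<forall>V'. admissible_from qs A (Suc k) (V(k := R)) V' \<longrightarrow> M V'))"
    using Cons by (simp add: qr)
  also have "\<dots> \<longleftrightarrow> (\<forall>V'. admissible_from (qr # qs) A k V V' \<longrightarrow> M V')"
    unfolding qr admissible_from_Cons
    by (metis admissible_from_def fun_upd_same lessI)
  finally show ?case .
qed

lemma sokrom_sat_universal:
  assumes "\<forall>qr\<in>set (prefix \<Phi>). fst qr"
  shows "sokrom_sat A I \<Phi> \<longleftrightarrow>
    (\<forall>s. (\<forall>v. s v \<in> A) \<longrightarrow> (\<forall>(bs, h1, h2)\<in>set (clauses \<Phi>). (\<exists>l\<in>set bs. lit_sem I s l) \<or>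
       (\<forall>V. admissible_from (prefix \<Phi>) A 0 (\<lambda>_. {}) V \<longrightarrow> hlit_sem V s h1 \<or> hlit_sem V s h2)))"
  unfolding sokrom_sat_def prefix_sat_universal[OF assms] matrix_sat_def by blast

definition neg_valuation :: "(nat \<Rightarrow> 'a) \<Rightarrow> hlit list \<Rightarrow> nat \<Rightarrow> 'a list set" where
  "neg_valuation s hs i = {map s zs |zs. HNeg i zs \<in> set hs}"

lemma neg_valuation_falsifies_neg:
  "HNeg i zs \<in> set hs \<Longrightarrow> \<not> hlit_sem (neg_valuation s hs) s (HNeg i zs)"
  by (auto simp: neg_valuation_def)

lemma neg_valuation_least:
  assumes "\<forall>h\<in>set hs. \<not> hlit_sem V s h"
  shows "neg_valuation s hs i \<subseteq> V i"
  using assms by (fastforce simp: neg_valuation_def)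

lemma hlit_sem_mono:
  "(\<And>i. V i \<subseteq> W i) \<Longrightarrow> hlit_sem V s h \<Longrightarrow> (\<And>i zs. h \<noteq> HNeg i zs) \<Longrightarrow> hlit_sem W s h"
  by (cases h) auto

lemma admissible_neg_valuation:
  assumes "\<forall>h\<in>set hs. hlit_wf pre h" and "\<forall>v. s v \<in> A"
  shows "admissible_from pre A 0 (\<lambda>_. {}) (neg_valuation s hs)"
  using assms unfolding admissible_from_def neg_valuation_def rels_def
  by fastforce

lemma hlit_sem_of_neg_valuation:
  assumes "\<exists>h\<in>set hs. hlit_sem (neg_valuation s hs) s h"
  shows "\<exists>h\<in>set hs. hlit_sem V s h"
proof (rule ccontr)
  assume unsat: "\<not> (\<exists>h\<in>set hs. hlit_sem V s h)"
  then have least: "\<And>i. neg_valuation s hs i \<subseteq> V i"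
    by (simp add: neg_valuation_least)
  from assms obtain h where h: "h \<in> set hs" "hlit_sem (neg_valuation s hs) s h" ..
  then have "hlit_sem V s h"
    using least hlit_sem_mono neg_valuation_falsifies_neg by metis
  with h unsat show False by blast
qed

lemma all_admissible_iff_neg_valuation:
  assumes "\<forall>h\<in>set hs. hlit_wf pre h" and "\<forall>v. s v \<in> A"
  shows "(\<forall>V. admissible_from pre A 0 (\<lambda>_. {}) V \<longrightarrow> (\<exists>h\<in>set hs. hlit_sem V s h)) \<longleftrightarrow>
         (\<exists>h\<in>set hs. hlit_sem (neg_valuation s hs) s h)"
  using admissible_neg_valuation[OF assms] hlit_sem_of_neg_valuation by blast

definition eq_cnf_holds :: "(nat \<Rightarrow> 'a) \<Rightarrow> (nat \<times> nat) list list \<Rightarrow> bool" where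
  "eq_cnf_holds s E \<longleftrightarrow> (\<forall>e\<in>set E. \<exists>(x, y)\<in>set e. s x = s y)"

text \<open>[] is the empty (valid) CNF and [[]] the CNF with one empty (unsatisfiable) clause.\<close>

fun h_pair_cnf :: "hlit \<Rightarrow> hlit \<Rightarrow> (nat \<times> nat) list list" where
  "h_pair_cnf (HPos i zs) (HNeg j ws) =
     (if i = j \<and> length zs = length ws then map (\<lambda>p. [p]) (zip zs ws) else [[]])"
| "h_pair_cnf (HNeg j ws) (HPos i zs) =
     (if i = j \<and> length zs = length ws then map (\<lambda>p. [p]) (zip zs ws) else [[]])"
| "h_pair_cnf (HNeg i zs) (HEx j) = (if i = j then [] else [[]])"
| "h_pair_cnf (HEx j) (HNeg i zs) = (if i = j then [] else [[]])"
| "h_pair_cnf _ _ = [[]]"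

lemma map_eq_map_iff_zip:
  "map s zs = map s ws \<longleftrightarrow> length zs = length ws \<and> (\<forall>(z, w)\<in>set (zip zs ws). s z = s w)"
  by (simp add: list_eq_iff_zip_eq zip_map_map split_def)

lemma eq_cnf_holds_h_pair_cnf:
  "eq_cnf_holds s (h_pair_cnf h1 h2) \<longleftrightarrow>
     hlit_sem (neg_valuation s [h1, h2]) s h1 \<or> hlit_sem (neg_valuation s [h1, h2]) s h2"
  by (cases h1; cases h2)
     (auto simp: eq_cnf_holds_def neg_valuation_def, auto simp: map_eq_map_iff_zip)

definition clause_cnf :: "'p kclause \<Rightarrow> 'p fo_cnf" where
  "clause_cnf = (\<lambda>(bs, h1, h2). map (\<lambda>e. bs @ map (\<lambda>(x, y). Pos (Eq x y)) e) (h_pair_cnf h1 h2))"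

lemma fo_univ_sat_clause_cnf:
  "fo_univ_sat A I (concat (map clause_cnf cs)) \<longleftrightarrow>
    (\<forall>s. (\<forall>v. s v \<in> A) \<longrightarrow> (\<forall>(bs, h1, h2)\<in>set cs.
       (\<exists>l\<in>set bs. lit_sem I s l) \<or> eq_cnf_holds s (h_pair_cnf h1 h2)))"
proof -
  have clause: "(\<forall>D\<in>set (clause_cnf c). \<exists>l\<in>set D. lit_sem I s l) \<longleftrightarrow>
      (case c of (bs, h1, h2) \<Rightarrow> (\<exists>l\<in>set bs. lit_sem I s l) \<or> eq_cnf_holds s (h_pair_cnf h1 h2))"
    for s c
    by (simp add: clause_cnf_def eq_cnf_holds_def split_def bex_Un)
  show ?thesis
    unfolding fo_univ_sat_def by (simp add: clause)
qed

theorem proposition2p1: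
  fixes ar :: "'p \<Rightarrow> nat" and \<Phi> :: "'p sokrom"
  assumes "Pi11_krom_r ar \<Phi>"
  shows "\<exists>\<phi> :: 'p fo_cnf. fo_cnf_wf ar \<phi> \<and>
           (\<forall>(A :: nat set) I. finite_structure ar A I \<longrightarrow>
              (sokrom_sat A I \<Phi> \<longleftrightarrow> fo_univ_sat A I \<phi>))"
proof (intro exI conjI allI impI)
  have wf: "sokrom_wf ar \<Phi>" and universal: "\<forall>qr\<in>set (prefix \<Phi>). fst qr"
    using assms by (auto simp: Pi11_krom_r_def)
  let ?\<phi> = "concat (map clause_cnf (clauses \<Phi>))"
  show "fo_cnf_wf ar ?\<phi>"
    using wf by (fastforce simp: fo_cnf_wf_def sokrom_wf_def clause_cnf_def)
  fix A :: "nat set" and I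
  have H_part_iff: "(\<forall>V. admissible_from (prefix \<Phi>) A 0 (\<lambda>_. {}) V \<longrightarrow> hlit_sem V s h1 \<or> hlit_sem V s h2)
        \<longleftrightarrow> eq_cnf_holds s (h_pair_cnf h1 h2)"
    if s: "\<forall>v. s v \<in> A" and c: "(bs, h1, h2) \<in> set (clauses \<Phi>)" for s bs h1 h2
  proof -
    have "\<forall>h\<in>set [h1, h2]. hlit_wf (prefix \<Phi>) h"
      using wf c by (auto simp: sokrom_wf_def)
    from all_admissible_iff_neg_valuation[OF this s] show ?thesis
      by (simp add: eq_cnf_holds_h_pair_cnf)
  qed
  then show "sokrom_sat A I \<Phi> \<longleftrightarrow> fo_univ_sat A I ?\<phi>"
    unfolding sokrom_sat_universal[OF universal] fo_univ_sat_clause_cnf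
    by (intro all_cong1 imp_cong refl ball_cong) (clarsimp simp: H_part_iff)
qed

end
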